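(* Let $G$ be a finite pseudo reflection group. Then $B_G(\Upsilon)$ is spanned as a vector space by the set of products $T_we_{i_1}e_{i_2}\cdots e_{i_M}$ with $w\in G$, $M\ge0$, the indices $i_1,\dots,i_M\in P$ pairwise distinct, and $e_{i_u}e_{i_v}=e_{i_v}e_{i_u}$ for all $u,v$.
   Context: Let $V$ be a finite-dimensional complex vector space and $G\subset U(V)$ a finite pseudo reflection group. Let $R$ be the set of pseudo reflections in $G$ and $\{H_i\}_{i\in P}$ the set of their reflecting hyperplanes. $w(i)$ is defined by $H_{w(i)}=w(H_i)$, and $i\sim j$ means $j=w(i)$ for some $w$. $R(i,j)=\{s\in R: s(H_j)=H_i\}$. $G_i$ is the pointwise stabilizer of $H_i$, and $s_i\in G_i$ its element with exceptional eigenvalue $e^{2\pi\sqrt{-1}/|G_i|}$. For $i\ne j$, $H_i\pitchfork H_j$ means $\{k: H_i\cap H_j\subset H_k\}=\{i,j\}$; a codimension-2 edge is crossing if it equals $H_i\cap H_j$ with $H_i\pitchfork H_j$, noncrossing otherwise. $V_w$ is the fixed space of $w$. Admissible parameters $\Upsilon=\{\mu_s,\tau_i\}$: $\mu_s\ne0$ constant on conjugacy classes of $R$, $\tau_i$ constant on $G$-orbits of $P$. $B_G(\Upsilon)$ is the unital $\mathbb C$-algebra generated by $\{T_w\}_{w\in G}\cup\{e_i\}_{i\in P}$, $T_1=1$, with relations: (0) $T_{w_1}T_{w_2}=T_{w_1w_2}$; (1) $T_{s_i}e_i=e_iT_{s_i}=e_i$; (1') $T_we_i=e_iT_w=e_i$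 if $w(H_i)=H_i$ and $H_i\cap V_w$ is a noncrossing codimension-2 edge; (2) $e_i^2=\tau_ie_i$; (3) $T_we_j=e_iT_w$ if $w(H_j)=H_i$; (4) $e_ie_j=e_je_i$ if $H_i\pitchfork H_j$; (5) $e_ie_j=(\sum_{s\in R(i,j)}\mu_sT_s)e_j=e_i(\sum_{s\in R(i,j)}\mu_sT_s)$ if $i\ne j$, $H_i\cap H_j$ noncrossing and $R(i,j)\ne\emptyset$; (6) $e_ie_j=0$ if $i\ne j$, $H_i\cap H_j$ noncrossing and $R(i,j)=\emptyset$. *)

theory Defs
  imports "HOL-Analysis.Analysis"
begin

text \<open>V is modelled as complex^'n (any finite index type 'n), linear maps of V as
  matrices complex^'n^'n acting by (*v).  Dimensions are taken over the field of
  complex numbers (vec.dim, from Cartesian_Space).  The reflecting hyperplanes are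
  used themselves as their own indices, so the index set P is a set of subspaces.\<close>

type_synonym 'n cvec = "complex ^ 'n"
type_synonym 'n cmat = "complex ^ 'n ^ 'n"

definition adjoint_mat :: "'n::finite cmat \<Rightarrow> 'n cmat" where
  "adjoint_mat A = (\<chi> i j. cnj (A $ j $ i))"

definition unitary_mat :: "'n::finite cmat \<Rightarrow> bool" where
  "unitary_mat A \<longleftrightarrow> A ** adjoint_mat A = mat 1 \<and> adjoint_mat A ** A = mat 1"

definition fixspace :: "'n::finite cmat \<Rightarrow> 'n cvec set" where
  "fixspace w = {v. w *v v = v}"

definition act :: "'n::finite cmat \<Rightarrow> 'n cvec set \<Rightarrow> 'n cvec set" where
  "act w H = (\<lambda>v. w *v v) ` H"

definition is_hyperplane :: "'n::finite cvec set \<Rightarrow> bool" where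
  "is_hyperplane H \<longleftrightarrow> vec.subspace H \<and> vec.dim H = CARD('n) - 1"

definition pseudo_reflection :: "'n::finite cmat \<Rightarrow> bool" where
  "pseudo_reflection s \<longleftrightarrow> invertible s \<and> s \<noteq> mat 1 \<and> is_hyperplane (fixspace s)"

definition finite_mat_group :: "'n::finite cmat set \<Rightarrow> bool" where
  "finite_mat_group G \<longleftrightarrow> finite G \<and> mat 1 \<in> G \<and> (\<forall>a\<in>G. \<forall>b\<in>G. a ** b \<in> G)
     \<and> (\<forall>a\<in>G. invertible a \<and> matrix_inv a \<in> G)"

inductive_set subgroup_gen :: "'n::finite cmat set \<Rightarrow> 'n cmat set" for S where
  one: "mat 1 \<in> subgroup_gen S"
| gen: "s \<in> S \<Longrightarrow> s \<in> subgroup_gen S"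
| mult: "a \<in> subgroup_gen S \<Longrightarrow> b \<in> subgroup_gen S \<Longrightarrow> a ** b \<in> subgroup_gen S"
| inv: "a \<in> subgroup_gen S \<Longrightarrow> matrix_inv a \<in> subgroup_gen S"

definition refl_set :: "'n::finite cmat set \<Rightarrow> 'n cmat set" where
  "refl_set G = {s \<in> G. pseudo_reflection s}"

definition hyps :: "'n::finite cmat set \<Rightarrow> 'n cvec set set" where
  "hyps G = fixspace ` refl_set G"

definition unitary_pseudo_reflection_group :: "'n::finite cmat set \<Rightarrow> bool" where
  "unitary_pseudo_reflection_group G \<longleftrightarrow>
     finite_mat_group G \<and> (\<forall>w\<in>G. unitary_mat w) \<and> G = subgroup_gen (refl_set G)"

definition pt_stab :: "'n::finite cmat set \<Rightarrow> 'n cvec set \<Rightarrow> 'n cmat set" where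
  "pt_stab G H = {w \<in> G. \<forall>v\<in>H. w *v v = v}"

definition dist_refl :: "'n::finite cmat set \<Rightarrow> 'n cvec set \<Rightarrow> 'n cmat" where
  "dist_refl G H = (THE s. s \<in> pt_stab G H \<and>
     (\<exists>v. v \<notin> H \<and> s *v v = exp (2 * pi * \<i> / of_nat (card (pt_stab G H))) *s v))"

definition transversal :: "'n::finite cmat set \<Rightarrow> 'n cvec set \<Rightarrow> 'n cvec set \<Rightarrow> bool" where
  "transversal G H K \<longleftrightarrow> H \<noteq> K \<and> {L \<in> hyps G. H \<inter> K \<subseteq> L} = {H, K}"

definition codim2_edge :: "'n::finite cmat set \<Rightarrow> 'n cvec set \<Rightarrow> bool" where
  "codim2_edge G X \<longleftrightarrow> (\<exists>H\<in>hyps G. \<exists>K\<in>hyps G. H \<noteq> K \<and> X = H \<inter> K)"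

definition crossing_edge :: "'n::finite cmat set \<Rightarrow> 'n cvec set \<Rightarrow> bool" where
  "crossing_edge G X \<longleftrightarrow> (\<exists>H\<in>hyps G. \<exists>K\<in>hyps G. transversal G H K \<and> X = H \<inter> K)"

definition noncrossing_edge :: "'n::finite cmat set \<Rightarrow> 'n cvec set \<Rightarrow> bool" where
  "noncrossing_edge G X \<longleftrightarrow> codim2_edge G X \<and> \<not> crossing_edge G X"

definition Rset :: "'n::finite cmat set \<Rightarrow> 'n cvec set \<Rightarrow> 'n cvec set \<Rightarrow> 'n cmat set" where
  "Rset G H K = {s \<in> refl_set G. act s K = H}"

definition admissible :: "'n::finite cmat set \<Rightarrow> ('n cmat \<Rightarrow> complex) \<Rightarrow> ('n cvec set \<Rightarrow> complex) \<Rightarrow> bool" where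
  "admissible G \<mu> \<tau> \<longleftrightarrow>
     (\<forall>s\<in>refl_set G. \<mu> s \<noteq> 0)
   \<and> (\<forall>s\<in>refl_set G. \<forall>w\<in>G. \<mu> (w ** s ** matrix_inv w) = \<mu> s)
   \<and> (\<forall>H\<in>hyps G. \<forall>w\<in>G. \<tau> (act w H) = \<tau> H)"

text \<open>A unital complex algebra structure on a ring 'b: a unital ring homomorphism
  from the complex numbers into the centre of 'b (the scalars).\<close>
definition complex_algebra_str :: "(complex \<Rightarrow> 'b::ring_1) \<Rightarrow> bool" where
  "complex_algebra_str \<iota> \<longleftrightarrow> \<iota> 1 = 1 \<and> (\<forall>a b. \<iota> (a + b) = \<iota> a + \<iota> b)
     \<and> (\<forall>a b. \<iota> (a * b) = \<iota> a * \<iota> b) \<and> (\<forall>a x. \<iota> a * x = x * \<iota> a)"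

definition lin_span :: "(complex \<Rightarrow> 'b::ring_1) \<Rightarrow> 'b set \<Rightarrow> 'b set" where
  "lin_span \<iota> X = {(\<Sum>x\<in>F. \<iota> (c x) * x) | c F. finite F \<and> F \<subseteq> X}"

inductive_set gen_subalg :: "(complex \<Rightarrow> 'b::ring_1) \<Rightarrow> 'b set \<Rightarrow> 'b set" for \<iota> X where
  scal: "\<iota> c \<in> gen_subalg \<iota> X"
| gen: "x \<in> X \<Longrightarrow> x \<in> gen_subalg \<iota> X"
| add: "x \<in> gen_subalg \<iota> X \<Longrightarrow> y \<in> gen_subalg \<iota> X \<Longrightarrow> x + y \<in> gen_subalg \<iota> X"
| mult: "x \<in> gen_subalg \<iota> X \<Longrightarrow> y \<in> gen_subalg \<iota> X \<Longrightarrow> x * y \<in> gen_subalg \<iota> X"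

text \<open>The defining relations (0)-(6) of B_G(Upsilon) for elements T_w, e_i of an algebra.\<close>
definition BG_relations ::
  "'n::finite cmat set \<Rightarrow> ('n cmat \<Rightarrow> complex) \<Rightarrow> ('n cvec set \<Rightarrow> complex) \<Rightarrow>
   (complex \<Rightarrow> 'b::ring_1) \<Rightarrow> ('n cmat \<Rightarrow> 'b) \<Rightarrow> ('n cvec set \<Rightarrow> 'b) \<Rightarrow> bool" where
  "BG_relations G \<mu> \<tau> \<iota> T e \<longleftrightarrow>
     T (mat 1) = 1
   \<and> (\<forall>w1\<in>G. \<forall>w2\<in>G. T w1 * T w2 = T (w1 ** w2))
   \<and> (\<forall>i\<in>hyps G. T (dist_refl G i) * e i = e i \<and> e i * T (dist_refl G i) = e i)
   \<and> (\<forall>i\<in>hyps G. \<forall>w\<in>G. act w i = i \<and> noncrossing_edge G (i \<inter> fixspace w) \<longrightarrow>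
        T w * e i = e i \<and> e i * T w = e i)
   \<and> (\<forall>i\<in>hyps G. e i * e i = \<iota> (\<tau> i) * e i)
   \<and> (\<forall>i\<in>hyps G. \<forall>j\<in>hyps G. \<forall>w\<in>G. act w j = i \<longrightarrow> T w * e j = e i * T w)
   \<and> (\<forall>i\<in>hyps G. \<forall>j\<in>hyps G. i \<noteq> j \<and> transversal G i j \<longrightarrow> e i * e j = e j * e i)
   \<and> (\<forall>i\<in>hyps G. \<forall>j\<in>hyps G. i \<noteq> j \<and> noncrossing_edge G (i \<inter> j) \<and> Rset G i j \<noteq> {} \<longrightarrow>
        e i * e j = (\<Sum>s\<in>Rset G i j. \<iota> (\<mu> s) * T s) * e j
      \<and> e i * e j = e i * (\<Sum>s\<in>Rset G i j. \<iota> (\<mu> s) * T s))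
   \<and> (\<forall>i\<in>hyps G. \<forall>j\<in>hyps G. i \<noteq> j \<and> noncrossing_edge G (i \<inter> j) \<and> Rset G i j = {} \<longrightarrow>
        e i * e j = 0)"

definition BG_spanning_set ::
  "'n::finite cmat set \<Rightarrow> ('n cmat \<Rightarrow> 'b::ring_1) \<Rightarrow> ('n cvec set \<Rightarrow> 'b) \<Rightarrow> 'b set" where
  "BG_spanning_set G T e =
     {T w * prod_list (map e is) | w is. w \<in> G \<and> set is \<subseteq> hyps G \<and> distinct is
        \<and> (\<forall>u\<in>set is. \<forall>v\<in>set is. e u * e v = e v * e u)}"

end

theory Submission
  imports Defs
begin

text \<open>The span L of the words T_w e_{i_1} ... e_{i_M} contains 1 and lies in the subalgebra, so
  it suffices that L is stable under left multiplication by the generators.  For T_v this is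
  relation (0).  Relation (3) moves e_i past T_w, where it becomes e_j with H_j = w^{-1}(H_i).  If
  j occurs in the word, e_j is absorbed by (2); if e_j commutes with every factor, it extends the
  word; otherwise it fails to commute with some e_u, so by (4) H_j \<inter> H_u is a noncrossing edge
  and (5), (6) rewrite e_j e_u as a combination of the T_s e_u.\<close>

lemma matrix_mul_matrix_inv:
  fixes A :: "'a::semiring_1^'n^'n"
  assumes "invertible A"
  shows "A ** matrix_inv A = mat 1" and "matrix_inv A ** A = mat 1"
  using someI_ex[OF assms[unfolded invertible_def]] unfolding matrix_inv_def by auto

lemma fixspace_conjugate:
  fixes w s :: "'n::finite cmat"
  assumes "invertible w"
  shows "fixspace (w ** s ** matrix_inv w) = act w (fixspace s)"
proof
  show "fixspace (w ** s ** matrix_inv w) \<subseteq> act w (fixspace s)"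
  proof
    fix v assume "v \<in> fixspace (w ** s ** matrix_inv w)"
    hence v: "(w ** s ** matrix_inv w) *v v = v" by (simp add: fixspace_def)
    have "s *v (matrix_inv w *v v) = matrix_inv w *v v"
      using arg_cong[OF v, of "\<lambda>x. matrix_inv w *v x"]
      by (simp add: matrix_vector_mul_assoc matrix_mul_assoc matrix_mul_matrix_inv[OF assms])
    moreover have "v = w *v (matrix_inv w *v v)"
      by (simp add: matrix_vector_mul_assoc matrix_mul_matrix_inv[OF assms])
    ultimately show "v \<in> act w (fixspace s)" unfolding act_def fixspace_def by blast
  qed
  show "act w (fixspace s) \<subseteq> fixspace (w ** s ** matrix_inv w)"
  proof
    fix v assume "v \<in> act w (fixspace s)"
    then obtain u where u: "s *v u = u" "v = w *v u" unfolding act_def fixspace_def by auto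
    have "(w ** s ** matrix_inv w) *v v = w *v (s *v ((matrix_inv w ** w) *v u))"
      by (simp add: u matrix_vector_mul_assoc matrix_mul_assoc)
    also have "\<dots> = v" by (simp add: matrix_mul_matrix_inv[OF assms] u)
    finally show "v \<in> fixspace (w ** s ** matrix_inv w)" by (simp add: fixspace_def)
  qed
qed

lemma is_hyperplane_act:
  fixes w :: "'n::finite cmat"
  assumes "invertible w" and "is_hyperplane H"
  shows "is_hyperplane (act w H)"
proof -
  have "inj ((*v) w)" by (rule inj_matrix_vector_mult[OF assms(1)])
  hence "vec.dim ((*v) w ` H) = vec.dim H"
    by (intro vec.dim_image_eq[OF matrix_vector_mul_linear_gen]) (auto intro: inj_on_subset)
  moreover have "vec.subspace ((*v) w ` H)"
    using assms(2) unfolding is_hyperplane_def by (intro vec.subspace_image) auto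
  ultimately show ?thesis using assms(2) unfolding is_hyperplane_def act_def by auto
qed

lemma act_mem_hyps:
  assumes G: "finite_mat_group G" and "w \<in> G" and "H \<in> hyps G"
  shows "act w H \<in> hyps G"
proof -
  obtain s where s: "s \<in> G" "pseudo_reflection s" "H = fixspace s"
    using \<open>H \<in> hyps G\<close> unfolding hyps_def refl_set_def by auto
  have w: "invertible w" "matrix_inv w \<in> G" using G \<open>w \<in> G\<close> unfolding finite_mat_group_def by auto
  define s' where "s' = w ** s ** matrix_inv w"
  have "s' \<in> G" using G \<open>w \<in> G\<close> s(1) w(2) unfolding finite_mat_group_def s'_def by auto
  hence "invertible s'" using G unfolding finite_mat_group_def by auto
  moreover have "s' \<noteq> mat 1"
  proof
    assume "s' = mat 1"
    moreover have "matrix_inv w ** s' ** w = s" unfolding s'_def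
      by (metis matrix_mul_assoc matrix_mul_lid matrix_mul_rid matrix_mul_matrix_inv(2)[OF w(1)])
    ultimately show False using s(2) matrix_mul_matrix_inv(2)[OF w(1)]
      unfolding pseudo_reflection_def by simp
  qed
  moreover have "fixspace s' = act w H" unfolding s'_def s(3) by (rule fixspace_conjugate[OF w(1)])
  moreover have "is_hyperplane (act w H)"
    using is_hyperplane_act[OF w(1)] s(2,3) unfolding pseudo_reflection_def by auto
  ultimately show ?thesis using \<open>s' \<in> G\<close> unfolding hyps_def refl_set_def pseudo_reflection_def
    by (metis (mono_tags, lifting) image_eqI mem_Collect_eq)
qed

lemma act_act_matrix_inv:
  assumes "invertible w"
  shows "act w (act (matrix_inv w) H) = H"
  unfolding act_def image_image
  by (simp add: matrix_vector_mul_assoc matrix_mul_matrix_inv[OF assms])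

lemma noncrossing_edge_if_not_transversal:
  assumes "H \<in> hyps G" "K \<in> hyps G" "H \<noteq> K" "\<not> transversal G H K"
  shows "noncrossing_edge G (H \<inter> K)"
  unfolding noncrossing_edge_def codim2_edge_def crossing_edge_def
proof (intro conjI notI)
  show "\<exists>H'\<in>hyps G. \<exists>K'\<in>hyps G. H' \<noteq> K' \<and> H \<inter> K = H' \<inter> K'" using assms by blast
next
  assume "\<exists>H'\<in>hyps G. \<exists>K'\<in>hyps G. transversal G H' K' \<and> H \<inter> K = H' \<inter> K'"
  then obtain H' K' where "transversal G H' K'" "H \<inter> K = H' \<inter> K'" by blast
  hence edge: "{L \<in> hyps G. H \<inter> K \<subseteq> L} = {H', K'}" unfolding transversal_def by simp
  have "H \<in> {H', K'}" "K \<in> {H', K'}" using edge assms(1,2) by blast+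
  hence "{H, K} = {H', K'}" using assms(3) by auto
  thus False using edge assms(3,4) unfolding transversal_def by simp
qed

lemma prod_list_map_move_to_front:
  fixes f :: "'a \<Rightarrow> 'b::monoid_mult"
  assumes "\<forall>x\<in>set xs. f u * f x = f x * f u"
  shows "prod_list (map f (xs @ u # ys)) = f u * prod_list (map f (xs @ ys))"
  using assms by (induction xs) (simp_all add: mult.assoc[symmetric])

lemma lin_span_sum_mem: "finite F \<Longrightarrow> F \<subseteq> X \<Longrightarrow> (\<Sum>z\<in>F. \<iota> (c z) * z) \<in> lin_span \<iota> X"
  unfolding lin_span_def by blast

lemma lin_span_zero: "0 \<in> lin_span \<iota> X"
  using lin_span_sum_mem[of "{}" X \<iota>] by simp

context
  fixes \<iota> :: "complex \<Rightarrow> 'b::ring_1"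
  assumes \<iota>: "complex_algebra_str \<iota>"
begin

lemma scalar_one: "\<iota> 1 = 1"
  and scalar_add: "\<iota> (a + b) = \<iota> a + \<iota> b"
  and scalar_mult: "\<iota> (a * b) = \<iota> a * \<iota> b"
  and scalar_commute: "\<iota> a * x = x * \<iota> a"
  using \<iota> unfolding complex_algebra_str_def by blast+

lemma scalar_zero: "\<iota> 0 = 0"
  using scalar_add[of 0 0] by simp

lemma mult_scalar_left_commute: "x * (\<iota> a * y) = \<iota> a * (x * y)"
  by (simp only: mult.assoc[symmetric] scalar_commute[of a x])

lemma lin_span_superset: "x \<in> X \<Longrightarrow> x \<in> lin_span \<iota> X"
  using lin_span_sum_mem[of "{x}" X \<iota> "\<lambda>_. 1"] by (simp add: scalar_one)

lemma lin_span_add: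
  assumes "x \<in> lin_span \<iota> X" and "y \<in> lin_span \<iota> X"
  shows "x + y \<in> lin_span \<iota> X"
proof -
  obtain c F where x: "x = (\<Sum>z\<in>F. \<iota> (c z) * z)" "finite F" "F \<subseteq> X"
    using assms(1) unfolding lin_span_def by blast
  obtain d K where y: "y = (\<Sum>z\<in>K. \<iota> (d z) * z)" "finite K" "K \<subseteq> X"
    using assms(2) unfolding lin_span_def by blast
  define c' where "c' z = (if z \<in> F then c z else 0)" for z
  define d' where "d' z = (if z \<in> K then d z else 0)" for z
  have "x = (\<Sum>z\<in>F \<union> K. \<iota> (c' z) * z)"
    unfolding x(1) by (rule sum.mono_neutral_cong_left) (auto simp: x y c'_def scalar_zero)
  moreover have "y = (\<Sum>z\<in>F \<union> K. \<iota> (d' z) * z)"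
    unfolding y(1) by (rule sum.mono_neutral_cong_left) (auto simp: x y d'_def scalar_zero)
  ultimately have "x + y = (\<Sum>z\<in>F \<union> K. \<iota> (c' z + d' z) * z)"
    by (simp add: scalar_add sum.distrib distrib_right)
  also have "\<dots> \<in> lin_span \<iota> X" by (rule lin_span_sum_mem) (use x y in auto)
  finally show ?thesis .
qed

lemma lin_span_scale:
  assumes "x \<in> lin_span \<iota> X"
  shows "\<iota> a * x \<in> lin_span \<iota> X"
proof -
  obtain c F where x: "x = (\<Sum>z\<in>F. \<iota> (c z) * z)" "finite F" "F \<subseteq> X"
    using assms unfolding lin_span_def by blast
  have "\<iota> a * x = (\<Sum>z\<in>F. \<iota> (a * c z) * z)"
    unfolding x(1) scalar_mult by (simp add: sum_distrib_left mult.assoc)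
  also have "\<dots> \<in> lin_span \<iota> X" by (rule lin_span_sum_mem) (use x in auto)
  finally show ?thesis .
qed

lemma lin_span_sum: "(\<And>a. a \<in> A \<Longrightarrow> f a \<in> lin_span \<iota> X) \<Longrightarrow> sum f A \<in> lin_span \<iota> X"
  by (induction A rule: infinite_finite_induct) (auto simp: lin_span_zero lin_span_add)

lemma lin_span_mult_left:
  assumes "\<And>t. t \<in> X \<Longrightarrow> g * t \<in> lin_span \<iota> X" and "y \<in> lin_span \<iota> X"
  shows "g * y \<in> lin_span \<iota> X"
proof -
  obtain c F where y: "y = (\<Sum>z\<in>F. \<iota> (c z) * z)" "F \<subseteq> X"
    using assms(2) unfolding lin_span_def by blast
  have "g * y = (\<Sum>z\<in>F. \<iota> (c z) * (g * z))"
    unfolding y(1) sum_distrib_left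
    by (rule sum.cong) (simp_all add: mult.assoc[symmetric] scalar_commute[of _ g])
  also have "\<dots> \<in> lin_span \<iota> X"
    using y(2) assms(1) by (intro lin_span_sum lin_span_scale) auto
  finally show ?thesis .
qed

lemma gen_subalg_prod_list: "set xs \<subseteq> X \<Longrightarrow> prod_list xs \<in> gen_subalg \<iota> X"
proof (induction xs)
  case Nil
  show ?case using gen_subalg.scal[of \<iota> 1 X] by (simp add: scalar_one)
next
  case (Cons x xs)
  thus ?case by (simp add: gen_subalg.gen gen_subalg.mult)
qed

lemma gen_subalg_sum: "(\<And>a. a \<in> A \<Longrightarrow> f a \<in> gen_subalg \<iota> X) \<Longrightarrow> sum f A \<in> gen_subalg \<iota> X"
proof (induction A rule: infinite_finite_induct)
  case (insert a A)
  thus ?case by (simp add: gen_subalg.add)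
qed (use gen_subalg.scal[of \<iota> 0 X] in \<open>simp_all add: scalar_zero\<close>)

lemma gen_subalg_mult_lin_span:
  assumes "\<And>g t. g \<in> X \<Longrightarrow> t \<in> S \<Longrightarrow> g * t \<in> lin_span \<iota> S"
    and "x \<in> gen_subalg \<iota> X" and "y \<in> lin_span \<iota> S"
  shows "x * y \<in> lin_span \<iota> S"
  using assms(2,3)
proof (induction x arbitrary: y rule: gen_subalg.induct)
  case (scal c) thus ?case by (rule lin_span_scale)
next
  case (gen x) show ?case by (rule lin_span_mult_left) (use assms(1) gen in auto)
next
  case (add x1 x2) thus ?case by (simp add: distrib_right lin_span_add)
next
  case (mult x1 x2) thus ?case by (simp add: mult.assoc)
qed

lemma gen_subalg_eq_lin_span:
  assumes "1 \<in> lin_span \<iota> S"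
    and "\<And>g t. g \<in> X \<Longrightarrow> t \<in> S \<Longrightarrow> g * t \<in> lin_span \<iota> S"
    and "S \<subseteq> gen_subalg \<iota> X"
  shows "gen_subalg \<iota> X = lin_span \<iota> S"
proof
  show "gen_subalg \<iota> X \<subseteq> lin_span \<iota> S"
  proof
    fix x assume "x \<in> gen_subalg \<iota> X"
    from gen_subalg_mult_lin_span[OF assms(2) this assms(1)] show "x \<in> lin_span \<iota> S" by simp
  qed
  show "lin_span \<iota> S \<subseteq> gen_subalg \<iota> X"
  proof
    fix x assume "x \<in> lin_span \<iota> S"
    then obtain c F where "x = (\<Sum>z\<in>F. \<iota> (c z) * z)" "F \<subseteq> S" unfolding lin_span_def by blast
    thus "x \<in> gen_subalg \<iota> X"
      using assms(3) by (auto intro!: gen_subalg_sum gen_subalg.mult gen_subalg.scal)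
  qed
qed

end

locale BG_algebra =
  fixes G :: "'n::finite cmat set"
    and \<mu> :: "'n cmat \<Rightarrow> complex" and \<tau> :: "'n cvec set \<Rightarrow> complex"
    and \<iota> :: "complex \<Rightarrow> 'b::ring_1" and T :: "'n cmat \<Rightarrow> 'b" and e :: "'n cvec set \<Rightarrow> 'b"
  assumes group: "finite_mat_group G"
    and scalars: "complex_algebra_str \<iota>"
    and relations: "BG_relations G \<mu> \<tau> \<iota> T e"
begin

lemma T_one: "T (mat 1) = 1"
  using relations by (simp add: BG_relations_def)

lemma T_mult: "w1 \<in> G \<Longrightarrow> w2 \<in> G \<Longrightarrow> T w1 * T w2 = T (w1 ** w2)"
  using relations by (simp add: BG_relations_def)

lemma e_square: "i \<in> hyps G \<Longrightarrow> e i * e i = \<iota> (\<tau> i) * e i"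
  using relations by (simp add: BG_relations_def)

lemma T_mult_e: "i \<in> hyps G \<Longrightarrow> j \<in> hyps G \<Longrightarrow> w \<in> G \<Longrightarrow> act w j = i \<Longrightarrow> T w * e j = e i * T w"
  using relations by (simp add: BG_relations_def)

lemma e_commute_if_transversal:
  assumes "i \<in> hyps G" "j \<in> hyps G" "i \<noteq> j" "transversal G i j"
  shows "e i * e j = e j * e i"
proof -
  have "\<forall>i\<in>hyps G. \<forall>j\<in>hyps G. i \<noteq> j \<and> transversal G i j \<longrightarrow> e i * e j = e j * e i"
    using relations unfolding BG_relations_def by (elim conjE) assumption
  thus ?thesis using assms by blast
qed

lemma e_mult_noncrossing:
  "i \<in> hyps G \<Longrightarrow> j \<in> hyps G \<Longrightarrow> i \<noteq> j \<Longrightarrow> noncrossing_edge G (i \<inter> j) \<Longrightarrow> Rset G i j \<noteq> {} \<Longrightarrow>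
    e i * e j = (\<Sum>s\<in>Rset G i j. \<iota> (\<mu> s) * T s) * e j"
  using relations by (simp add: BG_relations_def)

lemma e_mult_noncrossing_zero:
  "i \<in> hyps G \<Longrightarrow> j \<in> hyps G \<Longrightarrow> i \<noteq> j \<Longrightarrow> noncrossing_edge G (i \<inter> j) \<Longrightarrow> Rset G i j = {} \<Longrightarrow>
    e i * e j = 0"
  using relations by (simp add: BG_relations_def)

definition spanning_word :: "'n cvec set list \<Rightarrow> bool" where
  "spanning_word ks \<longleftrightarrow> set ks \<subseteq> hyps G \<and> distinct ks \<and> (\<forall>u\<in>set ks. \<forall>v\<in>set ks. e u * e v = e v * e u)"

abbreviation span_B :: "'b set" where
  "span_B \<equiv> lin_span \<iota> (BG_spanning_set G T e)"

lemma T_prod_mem_span_B: "w \<in> G \<Longrightarrow> spanning_word ks \<Longrightarrow> T w * prod_list (map e ks) \<in> span_B"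
  by (rule lin_span_superset[OF scalars]) (unfold BG_spanning_set_def spanning_word_def, blast)

lemma spanning_word_subset_hyps: "spanning_word ks \<Longrightarrow> set ks \<subseteq> hyps G"
  and spanning_word_distinct: "spanning_word ks \<Longrightarrow> distinct ks"
  and spanning_word_commute:
    "spanning_word ks \<Longrightarrow> u \<in> set ks \<Longrightarrow> v \<in> set ks \<Longrightarrow> e u * e v = e v * e u"
  unfolding spanning_word_def by blast+

lemma spanning_word_move_to_front:
  assumes "spanning_word ks" and "u \<in> set ks"
  obtains rest where "prod_list (map e ks) = e u * prod_list (map e rest)"
    and "spanning_word (u # rest)"
proof -
  obtain xs ys where ks: "ks = xs @ u # ys" using split_list[OF assms(2)] by blast
  have "\<forall>x\<in>set xs. e u * e x = e x * e u"
    using spanning_word_commute[OF assms] unfolding ks by simp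
  hence "prod_list (map e ks) = e u * prod_list (map e (xs @ ys))"
    unfolding ks by (rule prod_list_map_move_to_front)
  moreover have "spanning_word (u # xs @ ys)"
  proof -
    have "set (u # xs @ ys) = set ks" unfolding ks by auto
    moreover have "distinct (u # xs @ ys)" using spanning_word_distinct[OF assms(1)] unfolding ks by auto
    ultimately show ?thesis using assms(1) unfolding spanning_word_def by presburger
  qed
  ultimately show thesis by (rule that)
qed

lemma e_prod_absorb:
  assumes "spanning_word ks" and "j \<in> set ks"
  shows "e j * prod_list (map e ks) = \<iota> (\<tau> j) * prod_list (map e ks)"
proof -
  obtain rest where front: "prod_list (map e ks) = e j * prod_list (map e rest)"
    using spanning_word_move_to_front[OF assms] by blast
  have "j \<in> hyps G" using spanning_word_subset_hyps[OF assms(1)] assms(2) by blast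
  thus ?thesis unfolding front by (simp add: e_square mult.assoc[symmetric])
qed

lemma spanning_word_Cons:
  assumes "spanning_word ks" and "j \<in> hyps G" and "j \<notin> set ks"
    and "\<forall>u\<in>set ks. e j * e u = e u * e j"
  shows "spanning_word (j # ks)"
proof -
  have "set (j # ks) \<subseteq> hyps G" "distinct (j # ks)"
    using spanning_word_subset_hyps[OF assms(1)] spanning_word_distinct[OF assms(1)] assms(2,3) by auto
  moreover have "\<forall>u\<in>set (j # ks). \<forall>v\<in>set (j # ks). e u * e v = e v * e u"
    using assms(1,4) unfolding spanning_word_def Ball_def by (metis set_ConsD)
  ultimately show ?thesis unfolding spanning_word_def by blast
qed

lemma T_e_prod_mem_span_B_noncommuting:
  assumes "w \<in> G" "j \<in> hyps G" "spanning_word ks"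
    and "u \<in> set ks" "e j * e u \<noteq> e u * e j"
  shows "T w * (e j * prod_list (map e ks)) \<in> span_B"
proof -
  obtain rest where front: "prod_list (map e ks) = e u * prod_list (map e rest)"
    and word: "spanning_word (u # rest)"
    using spanning_word_move_to_front[OF assms(3,4)] by blast
  let ?rest = "prod_list (map e rest)"
  have u: "u \<in> hyps G" "j \<noteq> u" using spanning_word_subset_hyps[OF assms(3)] assms(4,5) by auto
  have "\<not> transversal G j u" using e_commute_if_transversal[OF assms(2) u] assms(5) by blast
  hence edge: "noncrossing_edge G (j \<inter> u)" by (rule noncrossing_edge_if_not_transversal[OF assms(2) u])
  show ?thesis
  proof (cases "Rset G j u = {}")
    case True
    thus ?thesis unfolding front
      using e_mult_noncrossing_zero[OF assms(2) u edge] by (simp add: mult.assoc[symmetric] lin_span_zero)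
  next
    case False
    have "Rset G j u \<subseteq> G" unfolding Rset_def refl_set_def by auto
    have "T w * (e j * prod_list (map e ks)) = T w * ((e j * e u) * ?rest)"
      unfolding front by (simp add: mult.assoc)
    also have "\<dots> = (\<Sum>s\<in>Rset G j u. \<iota> (\<mu> s) * (T (w ** s) * prod_list (map e (u # rest))))"
      unfolding e_mult_noncrossing[OF assms(2) u edge False] sum_distrib_left sum_distrib_right
    proof (rule sum.cong[OF refl])
      fix s assume "s \<in> Rset G j u"
      hence "T (w ** s) = T w * T s" using T_mult[OF assms(1)] \<open>Rset G j u \<subseteq> G\<close> by auto
      thus "T w * (\<iota> (\<mu> s) * T s * e u * ?rest) = \<iota> (\<mu> s) * (T (w ** s) * prod_list (map e (u # rest)))"
        by (simp add: mult.assoc mult_scalar_left_commute[OF scalars])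
    qed
    also have "\<dots> \<in> span_B"
      using \<open>Rset G j u \<subseteq> G\<close> group word unfolding finite_mat_group_def
      by (intro lin_span_sum[OF scalars] lin_span_scale[OF scalars] T_prod_mem_span_B) (auto simp: assms(1))
    finally show ?thesis .
  qed
qed

lemma T_e_prod_mem_span_B:
  assumes "w \<in> G" "j \<in> hyps G" "spanning_word ks"
  shows "T w * (e j * prod_list (map e ks)) \<in> span_B"
proof -
  consider "j \<in> set ks"
    | "j \<notin> set ks" "\<forall>u\<in>set ks. e j * e u = e u * e j"
    | u where "u \<in> set ks" "e j * e u \<noteq> e u * e j"
    by blast
  thus ?thesis
  proof cases
    case 1
    have "T w * \<iota> (\<tau> j) = \<iota> (\<tau> j) * T w" by (rule scalar_commute[OF scalars, symmetric])
    hence "T w * (e j * prod_list (map e ks)) = \<iota> (\<tau> j) * (T w * prod_list (map e ks))"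
      by (simp add: e_prod_absorb[OF assms(3) 1] mult.assoc[symmetric])
    thus ?thesis
      using T_prod_mem_span_B[OF assms(1,3)] by (simp add: lin_span_scale[OF scalars])
  next
    case 2
    thus ?thesis
      using T_prod_mem_span_B[OF assms(1) spanning_word_Cons[OF assms(3,2)]] by simp
  next
    case 3
    thus ?thesis by (rule T_e_prod_mem_span_B_noncommuting[OF assms])
  qed
qed

lemma generator_mult_mem_span_B:
  assumes "g \<in> T ` G \<union> e ` hyps G" and "t \<in> BG_spanning_set G T e"
  shows "g * t \<in> span_B"
proof -
  obtain w ks where t: "t = T w * prod_list (map e ks)" "w \<in> G" "spanning_word ks"
    using assms(2) unfolding BG_spanning_set_def spanning_word_def by blast
  have w: "invertible w" "matrix_inv w \<in> G" using group t(2) unfolding finite_mat_group_def by auto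
  show ?thesis using assms(1)
  proof
    assume "g \<in> T ` G"
    then obtain v where "v \<in> G" "g = T v" by auto
    moreover have "v ** w \<in> G" using group \<open>v \<in> G\<close> t(2) unfolding finite_mat_group_def by auto
    ultimately show ?thesis
      using T_prod_mem_span_B[OF _ t(3)] t(1,2) by (simp add: mult.assoc[symmetric] T_mult)
  next
    assume "g \<in> e ` hyps G"
    then obtain i where i: "i \<in> hyps G" "g = e i" by auto
    define j where "j = act (matrix_inv w) i"
    have j: "j \<in> hyps G" unfolding j_def by (rule act_mem_hyps[OF group w(2) i(1)])
    have "e i * T w = T w * e j"
      using T_mult_e[OF i(1) j t(2)] act_act_matrix_inv[OF w(1)] unfolding j_def by simp
    hence "g * t = T w * (e j * prod_list (map e ks))" unfolding t(1) i(2) by (simp add: mult.assoc[symmetric])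
    thus ?thesis using T_e_prod_mem_span_B[OF t(2) j t(3)] by simp
  qed
qed

lemma BG_spanning_set_subset_gen_subalg:
  "BG_spanning_set G T e \<subseteq> gen_subalg \<iota> (T ` G \<union> e ` hyps G)"
proof
  fix t assume "t \<in> BG_spanning_set G T e"
  then obtain w ks where t: "t = T w * prod_list (map e ks)" "w \<in> G" "set ks \<subseteq> hyps G"
    unfolding BG_spanning_set_def by blast
  have "T w \<in> gen_subalg \<iota> (T ` G \<union> e ` hyps G)" using t(2) by (intro gen_subalg.gen) auto
  moreover have "prod_list (map e ks) \<in> gen_subalg \<iota> (T ` G \<union> e ` hyps G)"
    using t(3) by (intro gen_subalg_prod_list[OF scalars]) auto
  ultimately show "t \<in> gen_subalg \<iota> (T ` G \<union> e ` hyps G)" unfolding t(1) by (rule gen_subalg.mult)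
qed

theorem gen_subalg_eq_span_B: "gen_subalg \<iota> (T ` G \<union> e ` hyps G) = span_B"
proof (rule gen_subalg_eq_lin_span[OF scalars])
  show "1 \<in> span_B"
    using T_prod_mem_span_B[of "mat 1" "[]"] group
    by (simp add: T_one spanning_word_def finite_mat_group_def)
qed (fact generator_mult_mem_span_B BG_spanning_set_subset_gen_subalg)+

end

theorem lemma5p2:
  fixes G :: "'n::finite cmat set"
    and \<mu> :: "'n cmat \<Rightarrow> complex" and \<tau> :: "'n cvec set \<Rightarrow> complex"
    and \<iota> :: "complex \<Rightarrow> 'b::ring_1" and T :: "'n cmat \<Rightarrow> 'b" and e :: "'n cvec set \<Rightarrow> 'b"
  assumes "unitary_pseudo_reflection_group G"
    and "admissible G \<mu> \<tau>"
    and "complex_algebra_str \<iota>"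
    and "BG_relations G \<mu> \<tau> \<iota> T e"
  shows "gen_subalg \<iota> (T ` G \<union> e ` hyps G) = lin_span \<iota> (BG_spanning_set G T e)"
proof -
  interpret BG_algebra G \<mu> \<tau> \<iota> T e
    using assms(1,3,4) unfolding unitary_pseudo_reflection_group_def by unfold_locales auto
  show ?thesis by (rule gen_subalg_eq_span_B)
qed

end
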